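(* Let $|I|$ be a measurable cardinal, $\mathcal U$ a non-principal $\omega$-complete (countably complete) ultrafilter on $I$, and $\mathbb X_i=\langle X_i,\rho_i\rangle$ ($i\in I$) $L$-structures. Then the ultraproduct $\prod_{\mathcal U}\mathbb X_i$ is connected if and only if $\{i\in I:\mathbb X_i\text{ is connected}\}\in\mathcal U$.
   Context: $L$ is a language with one binary relation symbol; an $L$-structure is $\mathbb X=\langle X,\rho\rangle$, $X\neq\emptyset$, $\rho\subseteq X^2$. Connectivity is defined via the reflexivization $\rho_R=\rho\cup\{(x,x):x\in X\}$: $\mathbb X$ is connected iff for all $x,y\in X$ there are $n\in\omega$, $z_0,\dots,z_{n-1}\in X$ and $\epsilon\in\{0,1\}^{n+1}$ with $x\,\rho_R^{\epsilon_0}\,z_0\,\rho_R^{\epsilon_1}\cdots z_{n-1}\,\rho_R^{\epsilon_n}\,y$, where $\rho_R^0=\rho_R$ and $\rho_R^1=\rho_R^{-1}$. The ultraproduct $\prod_{\mathcal U}\mathbb X_i$ has universe $(\prod_i X_i)/\!\sim_{\mathcal U}$, where $x\sim_{\mathcal U}y$ iff $\{i:x_i=y_i\}\in\mathcal U$, and relation $[x]\,\rho\,[y]$ iff $\{i:x_i\,\rho_i\,y_i\}\in\mathcal U$. *)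

theory Defs
  imports "HOL-Library.Countable_Set"
begin

definition L_structure :: "'a set \<Rightarrow> ('a \<times> 'a) set \<Rightarrow> bool" where
  "L_structure X \<rho> \<longleftrightarrow> X \<noteq> {} \<and> \<rho> \<subseteq> X \<times> X"

definition reflz :: "'a set \<Rightarrow> ('a \<times> 'a) set \<Rightarrow> ('a \<times> 'a) set" where
  "reflz X \<rho> = \<rho> \<union> {(x, x) | x. x \<in> X}"

text \<open>One step a rho_R^e b, with e = False meaning exponent 0 (rho_R) and
  e = True meaning exponent 1 (converse of rho_R).\<close>
definition step_rel :: "('a \<times> 'a) set \<Rightarrow> bool \<Rightarrow> 'a \<Rightarrow> 'a \<Rightarrow> bool" where
  "step_rel R e a b \<longleftrightarrow> (if e then (b, a) \<in> R else (a, b) \<in> R)"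

definition connected_struct :: "'a set \<Rightarrow> ('a \<times> 'a) set \<Rightarrow> bool" where
  "connected_struct X \<rho> \<longleftrightarrow>
     (\<forall>x\<in>X. \<forall>y\<in>X. \<exists>zs eps. set zs \<subseteq> X \<and> length eps = length zs + 1 \<and>
        (let ps = x # zs @ [y] in
          \<forall>k < length zs + 1. step_rel (reflz X \<rho>) (eps ! k) (ps ! k) (ps ! Suc k)))"

text \<open>Ultrafilters on the index type 'i (I = UNIV), as families of subsets.\<close>
definition ultrafilter_on :: "'i set set \<Rightarrow> bool" where
  "ultrafilter_on U \<longleftrightarrow>
     UNIV \<in> U \<and> {} \<notin> U \<and>
     (\<forall>A B. A \<in> U \<and> A \<subseteq> B \<longrightarrow> B \<in> U) \<and>
     (\<forall>A B. A \<in> U \<and> B \<in> U \<longrightarrow> A \<inter> B \<in> U) \<and>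
     (\<forall>A. A \<in> U \<or> - A \<in> U)"

definition principal :: "'i set set \<Rightarrow> bool" where
  "principal U \<longleftrightarrow> (\<exists>i. U = {A. i \<in> A})"

definition countably_complete :: "'i set set \<Rightarrow> bool" where
  "countably_complete U \<longleftrightarrow> (\<forall>\<A>. \<A> \<subseteq> U \<and> countable \<A> \<longrightarrow> \<Inter>\<A> \<in> U)"

text \<open>|I| is a measurable cardinal (I = UNIV :: 'i set): I is uncountable and carries a
  non-principal |I|-complete ultrafilter, i.e. one closed under intersections of
  families of cardinality strictly less than |I| (no injection of I into the family).\<close>
definition measurable_cardinal_type :: "'i itself \<Rightarrow> bool" where
  "measurable_cardinal_type _ \<longleftrightarrow>
     \<not> countable (UNIV :: 'i set) \<and>
     (\<exists>V :: 'i set set. ultrafilter_on V \<and> \<not> principal V \<and>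
        (\<forall>\<A>. \<A> \<subseteq> V \<and> \<not> (\<exists>f :: 'i \<Rightarrow> 'i set. inj f \<and> range f \<subseteq> \<A>)
              \<longrightarrow> \<Inter>\<A> \<in> V))"

text \<open>Ultraproduct: universe is the product of the X_i modulo ~_U; [x] rho [y] iff
  {i. x_i rho_i y_i} is in U (independent of representatives).\<close>
definition up_eq :: "'i set set \<Rightarrow> ('i \<Rightarrow> 'a set) \<Rightarrow> (('i \<Rightarrow> 'a) \<times> ('i \<Rightarrow> 'a)) set" where
  "up_eq U X = {(x, y). x \<in> {x. \<forall>i. x i \<in> X i} \<and> y \<in> {x. \<forall>i. x i \<in> X i} \<and> {i. x i = y i} \<in> U}"

definition up_univ :: "'i set set \<Rightarrow> ('i \<Rightarrow> 'a set) \<Rightarrow> ('i \<Rightarrow> 'a) set set" where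
  "up_univ U X = {x. \<forall>i. x i \<in> X i} // up_eq U X"

definition up_rel :: "'i set set \<Rightarrow> ('i \<Rightarrow> 'a set) \<Rightarrow> ('i \<Rightarrow> ('a \<times> 'a) set)
                      \<Rightarrow> (('i \<Rightarrow> 'a) set \<times> ('i \<Rightarrow> 'a) set) set" where
  "up_rel U X \<rho> = {(A, B). A \<in> up_univ U X \<and> B \<in> up_univ U X \<and>
       (\<exists>x\<in>A. \<exists>y\<in>B. {i. (x i, y i) \<in> \<rho> i} \<in> U)}"

end

theory Submission
  imports Defs
begin

text \<open>Connectivity is witnessed by walks, and a walk of a fixed shape (its list of
  directions \<open>eps\<close>) is a finite conjunction of atomic
  facts, so by Los's theorem it exists in the ultraproduct iff it exists in almost every
  factor. From a disconnected pair in almost every factor one therefore gets a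
  disconnected pair in the ultraproduct. Conversely, the shapes of the walks joining
  \<open>x i\<close> to \<open>y i\<close> range over a countable set, so countable completeness makes one
  shape occur almost everywhere, and the walks of that shape glue to a walk in the
  ultraproduct.\<close>

lemma ultrafilter_on_mono: "ultrafilter_on U \<Longrightarrow> A \<in> U \<Longrightarrow> A \<subseteq> B \<Longrightarrow> B \<in> U"
  unfolding ultrafilter_on_def by blast

lemma ultrafilter_on_Int: "ultrafilter_on U \<Longrightarrow> A \<in> U \<Longrightarrow> B \<in> U \<Longrightarrow> A \<inter> B \<in> U"
  unfolding ultrafilter_on_def by blast

lemma ultrafilter_on_UNIV: "ultrafilter_on U \<Longrightarrow> UNIV \<in> U"
  unfolding ultrafilter_on_def by blast

lemma ultrafilter_on_nonempty: "ultrafilter_on U \<Longrightarrow> A \<in> U \<Longrightarrow> \<exists>i. i \<in> A"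
  unfolding ultrafilter_on_def by blast

lemma ultrafilter_on_Compl: "ultrafilter_on U \<Longrightarrow> A \<notin> U \<Longrightarrow> - A \<in> U"
  unfolding ultrafilter_on_def by blast

lemma ultrafilter_on_Un:
  assumes U: "ultrafilter_on U" and "A \<union> B \<in> U"
  shows "A \<in> U \<or> B \<in> U"
proof (rule ccontr)
  assume "\<not> (A \<in> U \<or> B \<in> U)"
  then have "- A \<in> U" "- B \<in> U" using ultrafilter_on_Compl[OF U] by auto
  then have "(A \<union> B) \<inter> (- A \<inter> - B) \<in> U"
    using assms by (simp add: ultrafilter_on_Int)
  then show False using ultrafilter_on_nonempty[OF U] by blast
qed

lemma ultrafilter_on_all_lessThan:
  fixes n :: nat
  assumes "ultrafilter_on U"
  shows "{i. \<forall>k<n. P k i} \<in> U \<longleftrightarrow> (\<forall>k<n. {i. P k i} \<in> U)"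
proof (induction n)
  case 0
  then show ?case using ultrafilter_on_UNIV[OF assms] by simp
next
  case (Suc n)
  have "{i. \<forall>k<Suc n. P k i} = {i. \<forall>k<n. P k i} \<inter> {i. P n i}"
    by (auto simp: less_Suc_eq)
  moreover have "{i. \<forall>k<n. P k i} \<inter> {i. P n i} \<in> U \<longleftrightarrow>
      {i. \<forall>k<n. P k i} \<in> U \<and> {i. P n i} \<in> U"
    by (meson assms inf_le1 inf_le2 ultrafilter_on_Int ultrafilter_on_mono)
  ultimately show ?case using Suc by (auto simp: less_Suc_eq)
qed

lemma countably_complete_ultrafilter_constant:
  fixes f :: "'i \<Rightarrow> 'b::countable"
  assumes U: "ultrafilter_on U" "countably_complete U" and S: "S \<in> U"
  shows "\<exists>v. {i\<in>S. f i = v} \<in> U"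
proof (rule ccontr)
  define \<A> where "\<A> = insert S (range (\<lambda>v. - {i\<in>S. f i = v}))"
  assume "\<nexists>v. {i\<in>S. f i = v} \<in> U"
  then have "range (\<lambda>v. - {i\<in>S. f i = v}) \<subseteq> U"
    using ultrafilter_on_Compl[OF U(1)] by blast
  then have "\<A> \<subseteq> U" using S unfolding \<A>_def by simp
  moreover have "countable \<A>" unfolding \<A>_def by simp
  ultimately have "\<Inter>\<A> \<in> U"
    using U(2) unfolding countably_complete_def by simp
  moreover have "\<Inter>\<A> = {}" unfolding \<A>_def by blast
  ultimately show False using ultrafilter_on_nonempty[OF U(1)] by blast
qed

definition walk :: "('a \<times> 'a) set \<Rightarrow> bool list \<Rightarrow> (nat \<Rightarrow> 'a) \<Rightarrow> bool" where
  "walk R eps w \<longleftrightarrow> (\<forall>k<length eps. step_rel R (eps ! k) (w k) (w (Suc k)))"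

definition joining_walk ::
    "'a set \<Rightarrow> ('a \<times> 'a) set \<Rightarrow> bool list \<Rightarrow> (nat \<Rightarrow> 'a) \<Rightarrow> 'a \<Rightarrow> 'a \<Rightarrow> bool" where
  "joining_walk X R eps w x y \<longleftrightarrow>
     eps \<noteq> [] \<and> w 0 = x \<and> w (length eps) = y \<and> (\<forall>k\<le>length eps. w k \<in> X) \<and> walk R eps w"

lemma walk_cong: "(\<And>k. k \<le> length eps \<Longrightarrow> w k = w' k) \<Longrightarrow> walk R eps w \<longleftrightarrow> walk R eps w'"
  unfolding walk_def by simp

lemma connected_struct_iff_walk:
  "connected_struct X \<rho> \<longleftrightarrow> (\<forall>x\<in>X. \<forall>y\<in>X. \<exists>eps w. joining_walk X (reflz X \<rho>) eps w x y)"
proof -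
  have "(\<exists>zs eps. set zs \<subseteq> X \<and> length eps = length zs + 1 \<and>
          (let ps = x # zs @ [y] in
            \<forall>k < length zs + 1. step_rel (reflz X \<rho>) (eps ! k) (ps ! k) (ps ! Suc k)))
      \<longleftrightarrow> (\<exists>eps w. joining_walk X (reflz X \<rho>) eps w x y)" (is "?list \<longleftrightarrow> ?walk")
    if "x \<in> X" "y \<in> X" for x y
  proof
    assume ?list
    then obtain zs eps where "set zs \<subseteq> X" "length eps = length zs + 1"
      "\<forall>k < length zs + 1. step_rel (reflz X \<rho>) (eps ! k)
         ((x # zs @ [y]) ! k) ((x # zs @ [y]) ! Suc k)"
      by (auto simp: Let_def)
    moreover have "(x # zs @ [y]) ! k \<in> X" if "k \<le> length zs + 1" for k
      using that \<open>set zs \<subseteq> X\<close> \<open>x \<in> X\<close> \<open>y \<in> X\<close>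
      by (cases k) (auto simp: nth_append le_Suc_eq)
    ultimately show ?walk
      by (intro exI[of _ eps] exI[of _ "\<lambda>k. (x # zs @ [y]) ! k"])
         (auto simp: joining_walk_def walk_def nth_append)
  next
    assume ?walk
    then obtain eps w where w: "eps \<noteq> []" "w 0 = x" "w (length eps) = y"
      "\<forall>k\<le>length eps. w k \<in> X" "walk (reflz X \<rho>) eps w"
      unfolding joining_walk_def by blast
    define zs where "zs = map (\<lambda>j. w (Suc j)) [0..<length eps - 1]"
    have ps: "(x # zs @ [y]) ! k = w k" if "k \<le> length eps" for k
    proof (cases "k = length eps")
      case False
      then show ?thesis using that w(2) by (cases k) (auto simp: zs_def nth_append)
    qed (use w(1,3) in \<open>cases eps, simp_all add: zs_def nth_append\<close>)
    show ?list
    proof (intro exI conjI)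
      show "set zs \<subseteq> X" using w(4) by (auto simp: zs_def)
      show len: "length eps = length zs + 1" using w(1) by (simp add: zs_def)
      show "let ps = x # zs @ [y] in
          \<forall>k < length zs + 1. step_rel (reflz X \<rho>) (eps ! k) (ps ! k) (ps ! Suc k)"
        unfolding Let_def
      proof (intro allI impI)
        fix k assume k: "k < length zs + 1"
        have "(x # zs @ [y]) ! k = w k" "(x # zs @ [y]) ! Suc k = w (Suc k)"
          using k len by (intro ps; simp)+
        then show "step_rel (reflz X \<rho>) (eps ! k) ((x # zs @ [y]) ! k) ((x # zs @ [y]) ! Suc k)"
          using w(5) k len unfolding walk_def by simp
      qed
    qed
  qed
  then show ?thesis unfolding connected_struct_def by blast
qed

abbreviation up_class :: "'i set set \<Rightarrow> ('i \<Rightarrow> 'a set) \<Rightarrow> ('i \<Rightarrow> 'a) \<Rightarrow> ('i \<Rightarrow> 'a) set" where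
  "up_class U X x \<equiv> up_eq U X `` {x}"

lemma equiv_up_eq:
  assumes U: "ultrafilter_on U"
  shows "equiv {x. \<forall>i. x i \<in> X i} (up_eq U X)"
proof (rule equivI)
  show "refl_on {x. \<forall>i. x i \<in> X i} (up_eq U X)"
    using ultrafilter_on_UNIV[OF U] unfolding refl_on_def up_eq_def by auto
  show "sym (up_eq U X)"
    unfolding sym_def up_eq_def by (auto simp: eq_commute)
  have "{i. x i = z i} \<in> U" if "{i. x i = y i} \<in> U" "{i. y i = z i} \<in> U" for x y z :: "'a \<Rightarrow> 'b"
    by (rule ultrafilter_on_mono[OF U ultrafilter_on_Int[OF U that]]) auto
  then show "trans (up_eq U X)"
    unfolding trans_def up_eq_def by blast
  show "up_eq U X \<subseteq> {x. \<forall>i. x i \<in> X i} \<times> {x. \<forall>i. x i \<in> X i}"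
    unfolding up_eq_def by auto
qed

lemma up_class_eq_iff:
  assumes "ultrafilter_on U" "\<forall>i. x i \<in> X i" "\<forall>i. y i \<in> X i"
  shows "up_class U X x = up_class U X y \<longleftrightarrow> {i. x i = y i} \<in> U"
proof -
  have "up_class U X x = up_class U X y \<longleftrightarrow> (x, y) \<in> up_eq U X"
    by (rule eq_equiv_class_iff[OF equiv_up_eq[OF assms(1)]]) (use assms in auto)
  also have "\<dots> \<longleftrightarrow> {i. x i = y i} \<in> U"
    using assms by (simp add: up_eq_def)
  finally show ?thesis .
qed

lemma up_class_in_up_univ: "\<forall>i. x i \<in> X i \<Longrightarrow> up_class U X x \<in> up_univ U X"
  unfolding up_univ_def by (simp add: quotientI)

lemma up_univE:
  assumes "A \<in> up_univ U X"
  obtains x where "\<forall>i. x i \<in> X i" "A = up_class U X x"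
  using assms unfolding up_univ_def by (auto elim: quotientE)

text \<open>Los's theorem for the atomic formulas of the reflexivized language.\<close>

lemma reflz_up_rel_iff:
  assumes U: "ultrafilter_on U" and x: "\<forall>i. x i \<in> X i" and y: "\<forall>i. y i \<in> X i"
  shows "(up_class U X x, up_class U X y) \<in> reflz (up_univ U X) (up_rel U X \<rho>)
    \<longleftrightarrow> {i. (x i, y i) \<in> reflz (X i) (\<rho> i)} \<in> U"
proof
  assume "(up_class U X x, up_class U X y) \<in> reflz (up_univ U X) (up_rel U X \<rho>)"
  then consider "(up_class U X x, up_class U X y) \<in> up_rel U X \<rho>"
    | "up_class U X x = up_class U X y"
    unfolding reflz_def by blast
  then show "{i. (x i, y i) \<in> reflz (X i) (\<rho> i)} \<in> U"
  proof cases
    case 1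
    then obtain x' y' where "{i. x i = x' i} \<in> U" "{i. y i = y' i} \<in> U"
      "{i. (x' i, y' i) \<in> \<rho> i} \<in> U"
      by (auto simp: up_rel_def up_eq_def)
    then have "{i. x i = x' i} \<inter> {i. y i = y' i} \<inter> {i. (x' i, y' i) \<in> \<rho> i} \<in> U"
      by (simp add: U ultrafilter_on_Int)
    then show ?thesis by (rule ultrafilter_on_mono[OF U]) (auto simp: reflz_def)
  next
    case 2
    then have "{i. x i = y i} \<in> U" using up_class_eq_iff[OF U x y] by simp
    then show ?thesis by (rule ultrafilter_on_mono[OF U]) (use x in \<open>auto simp: reflz_def\<close>)
  qed
next
  assume "{i. (x i, y i) \<in> reflz (X i) (\<rho> i)} \<in> U"
  moreover have "{i. (x i, y i) \<in> reflz (X i) (\<rho> i)} \<subseteq> {i. (x i, y i) \<in> \<rho> i} \<union> {i. x i = y i}"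
    unfolding reflz_def by auto
  ultimately have "{i. (x i, y i) \<in> \<rho> i} \<in> U \<or> {i. x i = y i} \<in> U"
    by (meson U ultrafilter_on_Un ultrafilter_on_mono)
  then show "(up_class U X x, up_class U X y) \<in> reflz (up_univ U X) (up_rel U X \<rho>)"
  proof
    assume "{i. (x i, y i) \<in> \<rho> i} \<in> U"
    moreover have "x \<in> up_class U X x" "y \<in> up_class U X y"
      using x y ultrafilter_on_UNIV[OF U] by (simp_all add: up_eq_def)
    ultimately have "(up_class U X x, up_class U X y) \<in> up_rel U X \<rho>"
      unfolding up_rel_def using x y up_class_in_up_univ by blast
    then show ?thesis unfolding reflz_def by blast
  next
    assume "{i. x i = y i} \<in> U"
    then have "up_class U X x = up_class U X y" using up_class_eq_iff[OF U x y] by simp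
    then show ?thesis unfolding reflz_def using up_class_in_up_univ[OF y] by auto
  qed
qed

lemma step_rel_up_rel_iff:
  assumes "ultrafilter_on U" "\<forall>i. x i \<in> X i" "\<forall>i. y i \<in> X i"
  shows "step_rel (reflz (up_univ U X) (up_rel U X \<rho>)) e (up_class U X x) (up_class U X y)
    \<longleftrightarrow> {i. step_rel (reflz (X i) (\<rho> i)) e (x i) (y i)} \<in> U"
  using reflz_up_rel_iff[OF assms] reflz_up_rel_iff[OF assms(1,3,2)]
  by (simp add: step_rel_def)

lemma walk_up_rel_iff:
  assumes U: "ultrafilter_on U" and w: "\<forall>k i. w k i \<in> X i"
  shows "walk (reflz (up_univ U X) (up_rel U X \<rho>)) eps (\<lambda>k. up_class U X (w k))
    \<longleftrightarrow> {i. walk (reflz (X i) (\<rho> i)) eps (\<lambda>k. w k i)} \<in> U"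
  unfolding walk_def ultrafilter_on_all_lessThan[OF U]
  by (simp add: step_rel_up_rel_iff[OF U] w)

lemma eventually_connected_if_connected_ultraproduct:
  assumes U: "ultrafilter_on U" and ne: "\<And>i. X i \<noteq> {}"
    and conn: "connected_struct (up_univ U X) (up_rel U X \<rho>)"
  shows "{i. connected_struct (X i) (\<rho> i)} \<in> U"
proof (rule ccontr)
  define C where "C = {i. connected_struct (X i) (\<rho> i)}"
  assume "{i. connected_struct (X i) (\<rho> i)} \<notin> U"
  then have nC: "- C \<in> U" unfolding C_def using ultrafilter_on_Compl[OF U] by blast
  have "\<forall>i. \<exists>a b. a \<in> X i \<and> b \<in> X i \<and>
      (i \<notin> C \<longrightarrow> \<not> (\<exists>eps w. joining_walk (X i) (reflz (X i) (\<rho> i)) eps w a b))"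
    using ne unfolding C_def connected_struct_iff_walk by blast
  then obtain a b where ab: "\<forall>i. a i \<in> X i" "\<forall>i. b i \<in> X i"
    and disconnected: "\<forall>i. i \<notin> C \<longrightarrow> \<not> (\<exists>eps w. joining_walk (X i) (reflz (X i) (\<rho> i)) eps w (a i) (b i))"
    by metis
  obtain eps W where W: "joining_walk (up_univ U X) (reflz (up_univ U X) (up_rel U X \<rho>)) eps W
      (up_class U X a) (up_class U X b)"
    using conn up_class_in_up_univ[OF ab(1)] up_class_in_up_univ[OF ab(2)]
    unfolding connected_struct_iff_walk by blast
  define n where "n = length eps"
  have "\<forall>k. \<exists>r. (\<forall>i. r i \<in> X i) \<and> (k \<le> n \<longrightarrow> W k = up_class U X r)"
  proof
    fix k
    show "\<exists>r. (\<forall>i. r i \<in> X i) \<and> (k \<le> n \<longrightarrow> W k = up_class U X r)"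
    proof (cases "k \<le> n")
      case True
      then have "W k \<in> up_univ U X" using W unfolding joining_walk_def n_def by blast
      then obtain r where "\<forall>i. r i \<in> X i" "W k = up_class U X r" by (rule up_univE)
      then show ?thesis by blast
    qed (use ab(1) in blast)
  qed
  then obtain r where r: "\<And>k. \<forall>i. r k i \<in> X i" "\<And>k. k \<le> n \<Longrightarrow> W k = up_class U X (r k)"
    by (auto dest!: choice)
  define w where "w k = (if k = 0 then a else if k = n then b else r k)" for k
  have w_in: "\<forall>k i. w k i \<in> X i" using ab r(1) unfolding w_def by simp
  have "n \<noteq> 0" using W unfolding joining_walk_def n_def by simp
  then have "W k = up_class U X (w k)" if "k \<le> n" for k
    using W r(2)[OF that] unfolding joining_walk_def n_def w_def by auto
  then have "walk (reflz (up_univ U X) (up_rel U X \<rho>)) eps W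
      \<longleftrightarrow> walk (reflz (up_univ U X) (up_rel U X \<rho>)) eps (\<lambda>k. up_class U X (w k))"
    by (rule walk_cong) (simp add: n_def)
  then have "walk (reflz (up_univ U X) (up_rel U X \<rho>)) eps (\<lambda>k. up_class U X (w k))"
    using W unfolding joining_walk_def by blast
  then have "{i. walk (reflz (X i) (\<rho> i)) eps (\<lambda>k. w k i)} \<in> U"
    using walk_up_rel_iff[OF U w_in] by blast
  then obtain i where "i \<notin> C" "walk (reflz (X i) (\<rho> i)) eps (\<lambda>k. w k i)"
    using ultrafilter_on_nonempty[OF U ultrafilter_on_Int[OF U nC]] by blast
  moreover have "eps \<noteq> []" using W unfolding joining_walk_def by simp
  ultimately have "joining_walk (X i) (reflz (X i) (\<rho> i)) eps (\<lambda>k. w k i) (a i) (b i)"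
    using w_in unfolding joining_walk_def w_def n_def by simp
  with disconnected \<open>i \<notin> C\<close> show False by blast
qed

lemma connected_ultraproduct_if_eventually_connected:
  assumes U: "ultrafilter_on U" "countably_complete U"
    and C: "{i. connected_struct (X i) (\<rho> i)} \<in> U"
  shows "connected_struct (up_univ U X) (up_rel U X \<rho>)"
  unfolding connected_struct_iff_walk
proof (intro ballI)
  fix A B assume "A \<in> up_univ U X" "B \<in> up_univ U X"
  then obtain x y where x: "\<forall>i. x i \<in> X i" "A = up_class U X x"
    and y: "\<forall>i. y i \<in> X i" "B = up_class U X y"
    by (metis up_univE)
  have "\<exists>eps v. i \<in> {i. connected_struct (X i) (\<rho> i)} \<longrightarrow>
      joining_walk (X i) (reflz (X i) (\<rho> i)) eps v (x i) (y i)" for i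
    using x(1) y(1) unfolding connected_struct_iff_walk by blast
  then obtain e v where ev: "\<And>i. i \<in> {i. connected_struct (X i) (\<rho> i)} \<Longrightarrow>
      joining_walk (X i) (reflz (X i) (\<rho> i)) (e i) (v i) (x i) (y i)"
    by metis
  text \<open>Countable completeness is used only here, to fix one length and one direction
    pattern for the walks on a set of the ultrafilter.\<close>
  obtain eps where "{i \<in> {i. connected_struct (X i) (\<rho> i)}. e i = eps} \<in> U"
    using countably_complete_ultrafilter_constant[OF U C] by blast
  then obtain G where G: "G \<in> U"
    and walk_G: "\<And>i. i \<in> G \<Longrightarrow> joining_walk (X i) (reflz (X i) (\<rho> i)) eps (v i) (x i) (y i)"
    using ev by blast
  define w where "w k i = (if i \<in> G \<and> k \<le> length eps then v i k else x i)" for k i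
  have w_in: "\<forall>k i. w k i \<in> X i" using walk_G x(1) unfolding w_def joining_walk_def by simp
  have "w 0 = x" using walk_G unfolding w_def joining_walk_def by auto
  have "G \<subseteq> {i. w (length eps) i = y i}"
    using walk_G unfolding w_def joining_walk_def by auto
  then have "{i. w (length eps) i = y i} \<in> U" by (rule ultrafilter_on_mono[OF U(1) G])
  then have "up_class U X (w (length eps)) = B"
    using up_class_eq_iff[OF U(1), of "w (length eps)" X y] w_in y by simp
  have "walk (reflz (X i) (\<rho> i)) eps (\<lambda>k. w k i)" if "i \<in> G" for i
  proof -
    have "walk (reflz (X i) (\<rho> i)) eps (v i)"
      using walk_G[OF that] unfolding joining_walk_def by simp
    moreover have "w k i = v i k" if "k \<le> length eps" for k
      using \<open>i \<in> G\<close> that by (simp add: w_def)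
    ultimately show ?thesis using walk_cong[of eps "\<lambda>k. w k i" "v i"] by simp
  qed
  then have "G \<subseteq> {i. walk (reflz (X i) (\<rho> i)) eps (\<lambda>k. w k i)}" by blast
  then have "walk (reflz (up_univ U X) (up_rel U X \<rho>)) eps (\<lambda>k. up_class U X (w k))"
    using walk_up_rel_iff[OF U(1) w_in] ultrafilter_on_mono[OF U(1) G] by blast
  moreover have "eps \<noteq> []"
    using walk_G ultrafilter_on_nonempty[OF U(1) G] unfolding joining_walk_def by blast
  ultimately show "\<exists>eps W. joining_walk (up_univ U X) (reflz (up_univ U X) (up_rel U X \<rho>)) eps W A B"
    using \<open>w 0 = x\<close> \<open>up_class U X (w (length eps)) = B\<close> x(2) up_class_in_up_univ w_in
    unfolding joining_walk_def by (intro exI[of _ eps] exI[of _ "\<lambda>k. up_class U X (w k)"]) (simp add: up_class_in_up_univ)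
qed

text \<open>Neither measurability of the index set nor non-principality of \<open>U\<close> is needed;
  countable completeness alone suffices.\<close>

theorem theorem2p7:
  fixes U :: "'i set set" and X :: "'i \<Rightarrow> 'a set" and \<rho> :: "'i \<Rightarrow> ('a \<times> 'a) set"
  assumes "measurable_cardinal_type TYPE('i)"
    and "ultrafilter_on U" and "\<not> principal U" and "countably_complete U"
    and "\<And>i. L_structure (X i) (\<rho> i)"
  shows "connected_struct (up_univ U X) (up_rel U X \<rho>) \<longleftrightarrow>
         {i. connected_struct (X i) (\<rho> i)} \<in> U"
proof
  have "X i \<noteq> {}" for i using assms(5) by (simp add: L_structure_def)
  then show "connected_struct (up_univ U X) (up_rel U X \<rho>) \<Longrightarrow> {i. connected_struct (X i) (\<rho> i)} \<in> U"
    using eventually_connected_if_connected_ultraproduct[OF assms(2)] by blast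
  show "{i. connected_struct (X i) (\<rho> i)} \<in> U \<Longrightarrow> connected_struct (up_univ U X) (up_rel U X \<rho>)"
    using connected_ultraproduct_if_eventually_connected[OF assms(2,4)] .
qed

end
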